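(* Let $(A,*,\{\cdot,\cdot,\cdot\})$ be a pre-Lie-Yamaguti algebra. Then: (i) the operations $[x,y]_C=x*y-y*x$ and $[\![x,y,z]\!]_C=\{x,y,z\}_D+\{x,y,z\}-\{y,x,z\}$ ($x,y,z\in A$) define a Lie-Yamaguti algebra structure on $A$ (the subadjacent Lie-Yamaguti algebra $A^c$); (ii) defining $L:A\to\mathfrak{gl}(A)$, $L_xz=x*z$, and $\mathcal R:\otimes^2A\to\mathfrak{gl}(A)$, $\mathcal R(x,y)z=\{z,x,y\}$, the triple $(A;L,\mathcal R)$ is a representation of $A^c$ on $A$, and the identity map $\mathrm{Id}:A\to A$ is a relative Rota-Baxter operator on $A^c$ with respect to $(A;L,\mathcal R)$.
   Context: All vector spaces are over a field of characteristic $0$. A pre-Lie-Yamaguti algebra is a vector space $A$ with a bilinear operation $*$ and a trilinear operation $\{\cdot,\cdot,\cdot\}$ such that, writing $[x,y]_C=x*y-y*x$, $(x,y,z)=(x*y)*z-x*(y*z)$ and $\{x,y,z\}_D=\{z,y,x\}-\{z,x,y\}+(y,x,z)-(x,y,z)$, for all $x,y,z,w,t\in A$: (P1) $\{z,[x,y]_C,w\}-\{y*z,x,w\}+\{x*z,y,w\}=0$; (P2) $\{x,y,[z,w]_C\}=z*\{x,y,w\}-w*\{x,y,z\}$; (P3) $\{\{x,y,z\},w,t\}-\{\{x,y,w\},z,t\}-\{x,y,\{z,w,t\}_D\}-\{x,y,\{z,w,t\}\}+\{x,y,\{w,z,t\}\}+\{z,w,\{x,y,t\}\}_D=0$; (P4)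 $\{z,\{x,y,w\}_D,t\}+\{z,\{x,y,w\},t\}-\{z,\{y,x,w\},t\}+\{z,w,\{x,y,t\}_D\}+\{z,w,\{x,y,t\}\}-\{z,w,\{y,x,t\}\}=\{x,y,\{z,w,t\}\}_D-\{\{x,y,z\}_D,w,t\}$; (P5) $\{x,y,z\}_D*w+\{x,y,z\}*w-\{y,x,z\}*w=\{x,y,z*w\}_D-z*\{x,y,w\}_D$. A Lie-Yamaguti algebra is a vector space $\mathfrak g$ with a bilinear skew-symmetric $[\cdot,\cdot]$ and a trilinear $[\![\cdot,\cdot,\cdot]\!]$ skew-symmetric in its first two arguments such that for all $x,y,z,w,t$: (1) $[[x,y],z]+[[y,z],x]+[[z,x],y]+[\![x,y,z]\!]+[\![y,z,x]\!]+[\![z,x,y]\!]=0$; (2) $[\![[x,y],z,w]\!]+[\![[y,z],x,w]\!]+[\![[z,x],y,w]\!]=0$; (3) $[\![x,y,[z,w]]\!]=[[\![x,y,z]\!],w]+[z,[\![x,y,w]\!]]$; (4) $[\![x,y,[\![z,w,t]\!]]\!]=[\![[\![x,y,z]\!],w,t]\!]+[\![z,[\![x,y,w]\!],t]\!]+[\![z,w,[\![x,y,t]\!]]\!]$. A representation $(V;\rho,\mu)$ of $\mathfrak g$ is a linear $\rho:\mathfrak g\to\mathfrak{gl}(V)$ and bilinear $\mu:\otimes^2\mathfrak g\to\mathfrak{gl}(V)$ such that, with $D_{\rho,\mu}(x,y):=\mu(y,x)-\mu(x,y)+[\rho(x),\rho(y)]-\rho([x,y])$: $\mu([x,y],z)-\mu(x,z)\rho(y)+\mu(y,z)\rho(x)=0$;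 $\mu(x,[y,z])-\rho(y)\mu(x,z)+\rho(z)\mu(x,y)=0$; $\rho([\![x,y,z]\!])=[D_{\rho,\mu}(x,y),\rho(z)]$; $\mu(z,w)\mu(x,y)-\mu(y,w)\mu(x,z)-\mu(x,[\![y,z,w]\!])+D_{\rho,\mu}(y,z)\mu(x,w)=0$; $\mu([\![x,y,z]\!],w)+\mu(z,[\![x,y,w]\!])=[D_{\rho,\mu}(x,y),\mu(z,w)]$. A relative Rota-Baxter operator on $\mathfrak g$ with respect to $(V;\rho,\mu)$ is a linear map $T:V\to\mathfrak g$ with $[Tu,Tv]=T(\rho(Tu)v-\rho(Tv)u)$ and $[\![Tu,Tv,Tw]\!]=T(D_{\rho,\mu}(Tu,Tv)w+\mu(Tv,Tw)u-\mu(Tu,Tw)v)$ for all $u,v,w\in V$. *)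

theory Defs
  imports Complex_Main
begin

definition bilinear_wrt :: "('k::field \<Rightarrow> 'a::ab_group_add \<Rightarrow> 'a) \<Rightarrow> ('a \<Rightarrow> 'a \<Rightarrow> 'a) \<Rightarrow> bool" where
  "bilinear_wrt s f \<longleftrightarrow> (\<forall>x. Vector_Spaces.linear s s (f x)) \<and> (\<forall>y. Vector_Spaces.linear s s (\<lambda>x. f x y))"

definition trilinear_wrt :: "('k::field \<Rightarrow> 'a::ab_group_add \<Rightarrow> 'a) \<Rightarrow> ('a \<Rightarrow> 'a \<Rightarrow> 'a \<Rightarrow> 'a) \<Rightarrow> bool" where
  "trilinear_wrt s f \<longleftrightarrow> (\<forall>x y. Vector_Spaces.linear s s (f x y)) \<and> (\<forall>x z. Vector_Spaces.linear s s (\<lambda>y. f x y z))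
      \<and> (\<forall>y z. Vector_Spaces.linear s s (\<lambda>x. f x y z))"

definition plyC :: "('a::ab_group_add \<Rightarrow> 'a \<Rightarrow> 'a) \<Rightarrow> 'a \<Rightarrow> 'a \<Rightarrow> 'a" where
  "plyC m x y = m x y - m y x"

definition plyAss :: "('a::ab_group_add \<Rightarrow> 'a \<Rightarrow> 'a) \<Rightarrow> 'a \<Rightarrow> 'a \<Rightarrow> 'a \<Rightarrow> 'a" where
  "plyAss m x y z = m (m x y) z - m x (m y z)"

definition plyD :: "('a::ab_group_add \<Rightarrow> 'a \<Rightarrow> 'a) \<Rightarrow> ('a \<Rightarrow> 'a \<Rightarrow> 'a \<Rightarrow> 'a) \<Rightarrow> 'a \<Rightarrow> 'a \<Rightarrow> 'a \<Rightarrow> 'a" where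
  "plyD m t x y z = t z y x - t z x y + plyAss m y x z - plyAss m x y z"

definition pre_lie_yamaguti ::
  "('k::field \<Rightarrow> 'a::ab_group_add \<Rightarrow> 'a) \<Rightarrow> ('a \<Rightarrow> 'a \<Rightarrow> 'a) \<Rightarrow> ('a \<Rightarrow> 'a \<Rightarrow> 'a \<Rightarrow> 'a) \<Rightarrow> bool" where
  "pre_lie_yamaguti s m t \<longleftrightarrow>
     vector_space s \<and> bilinear_wrt s m \<and> trilinear_wrt s t \<and>
     (\<forall>x y z w. t z (plyC m x y) w - t (m y z) x w + t (m x z) y w = 0) \<and>
     (\<forall>x y z w. t x y (plyC m z w) = m z (t x y w) - m w (t x y z)) \<and>
     (\<forall>x y z w u. t (t x y z) w u - t (t x y w) z u - t x y (plyD m t z w u) - t x y (t z w u)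
                  + t x y (t w z u) + plyD m t z w (t x y u) = 0) \<and>
     (\<forall>x y z w u. t z (plyD m t x y w) u + t z (t x y w) u - t z (t y x w) u
                  + t z w (plyD m t x y u) + t z w (t x y u) - t z w (t y x u)
                  = plyD m t x y (t z w u) - t (plyD m t x y z) w u) \<and>
     (\<forall>x y z w. m (plyD m t x y z) w + m (t x y z) w - m (t y x z) w
                  = plyD m t x y (m z w) - m z (plyD m t x y w))"

definition lie_yamaguti ::
  "('k::field \<Rightarrow> 'g::ab_group_add \<Rightarrow> 'g) \<Rightarrow> ('g \<Rightarrow> 'g \<Rightarrow> 'g) \<Rightarrow> ('g \<Rightarrow> 'g \<Rightarrow> 'g \<Rightarrow> 'g) \<Rightarrow> bool" where
  "lie_yamaguti s b t \<longleftrightarrow>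
     vector_space s \<and> bilinear_wrt s b \<and> trilinear_wrt s t \<and>
     (\<forall>x y. b x y = - b y x) \<and> (\<forall>x y z. t x y z = - t y x z) \<and>
     (\<forall>x y z. b (b x y) z + b (b y z) x + b (b z x) y + t x y z + t y z x + t z x y = 0) \<and>
     (\<forall>x y z w. t (b x y) z w + t (b y z) x w + t (b z x) y w = 0) \<and>
     (\<forall>x y z w. t x y (b z w) = b (t x y z) w + b z (t x y w)) \<and>
     (\<forall>x y z w u. t x y (t z w u) = t (t x y z) w u + t z (t x y w) u + t z w (t x y u))"

definition repD ::
  "('g \<Rightarrow> 'g \<Rightarrow> 'g) \<Rightarrow> ('g \<Rightarrow> 'v \<Rightarrow> 'v) \<Rightarrow> ('g \<Rightarrow> 'g \<Rightarrow> 'v \<Rightarrow> 'v) \<Rightarrow> 'g \<Rightarrow> 'g \<Rightarrow> 'v \<Rightarrow> 'v::ab_group_add" where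
  "repD b \<rho> \<mu> x y v = \<mu> y x v - \<mu> x y v + (\<rho> x (\<rho> y v) - \<rho> y (\<rho> x v)) - \<rho> (b x y) v"

definition ly_rep ::
  "('k::field \<Rightarrow> 'g::ab_group_add \<Rightarrow> 'g) \<Rightarrow> ('g \<Rightarrow> 'g \<Rightarrow> 'g) \<Rightarrow> ('g \<Rightarrow> 'g \<Rightarrow> 'g \<Rightarrow> 'g) \<Rightarrow>
   ('k \<Rightarrow> 'v::ab_group_add \<Rightarrow> 'v) \<Rightarrow> ('g \<Rightarrow> 'v \<Rightarrow> 'v) \<Rightarrow> ('g \<Rightarrow> 'g \<Rightarrow> 'v \<Rightarrow> 'v) \<Rightarrow> bool" where
  "ly_rep sg b t sv \<rho> \<mu> \<longleftrightarrow>
     vector_space sv \<and>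
     (\<forall>x. Vector_Spaces.linear sv sv (\<rho> x)) \<and> (\<forall>v. Vector_Spaces.linear sg sv (\<lambda>x. \<rho> x v)) \<and>
     (\<forall>x y. Vector_Spaces.linear sv sv (\<mu> x y)) \<and> (\<forall>y v. Vector_Spaces.linear sg sv (\<lambda>x. \<mu> x y v)) \<and>
     (\<forall>x v. Vector_Spaces.linear sg sv (\<lambda>y. \<mu> x y v)) \<and>
     (\<forall>x y z v. \<mu> (b x y) z v - \<mu> x z (\<rho> y v) + \<mu> y z (\<rho> x v) = 0) \<and>
     (\<forall>x y z v. \<mu> x (b y z) v - \<rho> y (\<mu> x z v) + \<rho> z (\<mu> x y v) = 0) \<and>
     (\<forall>x y z v. \<rho> (t x y z) v = repD b \<rho> \<mu> x y (\<rho> z v) - \<rho> z (repD b \<rho> \<mu> x y v)) \<and>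
     (\<forall>x y z w v. \<mu> z w (\<mu> x y v) - \<mu> y w (\<mu> x z v) - \<mu> x (t y z w) v
                   + repD b \<rho> \<mu> y z (\<mu> x w v) = 0) \<and>
     (\<forall>x y z w v. \<mu> (t x y z) w v + \<mu> z (t x y w) v
                   = repD b \<rho> \<mu> x y (\<mu> z w v) - \<mu> z w (repD b \<rho> \<mu> x y v))"

definition relative_rb ::
  "('k::field \<Rightarrow> 'g::ab_group_add \<Rightarrow> 'g) \<Rightarrow> ('g \<Rightarrow> 'g \<Rightarrow> 'g) \<Rightarrow> ('g \<Rightarrow> 'g \<Rightarrow> 'g \<Rightarrow> 'g) \<Rightarrow>
   ('k \<Rightarrow> 'v::ab_group_add \<Rightarrow> 'v) \<Rightarrow> ('g \<Rightarrow> 'v \<Rightarrow> 'v) \<Rightarrow> ('g \<Rightarrow> 'g \<Rightarrow> 'v \<Rightarrow> 'v) \<Rightarrow> ('v \<Rightarrow> 'g) \<Rightarrow> bool" where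
  "relative_rb sg b t sv \<rho> \<mu> T \<longleftrightarrow>
     Vector_Spaces.linear sv sg T \<and>
     (\<forall>u v. b (T u) (T v) = T (\<rho> (T u) v - \<rho> (T v) u)) \<and>
     (\<forall>u v w. t (T u) (T v) (T w) =
        T (repD b \<rho> \<mu> (T u) (T v) w + \<mu> (T v) (T w) u - \<mu> (T u) (T w) v))"

definition plyLY :: "('a::ab_group_add \<Rightarrow> 'a \<Rightarrow> 'a) \<Rightarrow> ('a \<Rightarrow> 'a \<Rightarrow> 'a \<Rightarrow> 'a) \<Rightarrow> 'a \<Rightarrow> 'a \<Rightarrow> 'a \<Rightarrow> 'a" where
  "plyLY m t x y z = plyD m t x y z + t x y z - t y x z"

end

theory Submission
  imports Defs
begin

text \<open>With \<open>\<rho> = L\<close> and \<open>\<mu> = \<R>\<close>, the operator \<open>D\<^sub>\<rho>\<^sub>,\<^sub>\<mu>(x, y)\<close> is exactly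
  \<open>{x, y, -}\<^sub>D\<close>, so the axioms (P1)--(P5) of a pre-Lie-Yamaguti algebra are literally the five
  identities of a representation of \<open>A\<^sup>c\<close> on \<open>A\<close>, and the Rota-Baxter identities for \<open>Id\<close>
  are the defining formulas of \<open>[-,-]\<^sub>C\<close> and \<open>[[-,-,-]]\<^sub>C\<close>. The first Lie-Yamaguti identity
  of \<open>A\<^sup>c\<close> holds in any algebra with these two operations; the other three are explicit linear
  combinations of instances of (P1), (P2), (P5), resp. (P2), (P5), resp. (P2)--(P5).\<close>

locale pre_lie_yamaguti_algebra =
  fixes s :: "'k::field \<Rightarrow> 'a::ab_group_add \<Rightarrow> 'a"
    and m :: "'a \<Rightarrow> 'a \<Rightarrow> 'a"
    and t :: "'a \<Rightarrow> 'a \<Rightarrow> 'a \<Rightarrow> 'a"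
  assumes pre_lie_yamaguti: "pre_lie_yamaguti s m t"
begin

lemma vector_space: "vector_space s"
  using pre_lie_yamaguti by (simp add: pre_lie_yamaguti_def)

sublocale vs: vector_space s
  by (fact vector_space)

lemma multilinear:
  "Vector_Spaces.linear s s (m x)" "Vector_Spaces.linear s s (\<lambda>x. m x y)"
  "Vector_Spaces.linear s s (t x y)" "Vector_Spaces.linear s s (\<lambda>y. t x y z)"
  "Vector_Spaces.linear s s (\<lambda>x. t x y z)"
  using pre_lie_yamaguti by (simp_all add: pre_lie_yamaguti_def bilinear_wrt_def trilinear_wrt_def)

lemmas multilinear_homs = multilinear[THEN module_hom_linearI]

lemmas additive_simps =
  multilinear_homs[THEN module_hom.add] multilinear_homs[THEN module_hom.diff]
  multilinear_homs[THEN module_hom.neg] multilinear_homs[THEN module_hom.zero]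

lemmas scale_simps = multilinear_homs[THEN module_hom.scale] vs.scale_right_diff_distrib

lemmas ply_defs = plyLY_def plyD_def plyAss_def plyC_def

definition "P1 x y z w = t z (plyC m x y) w - t (m y z) x w + t (m x z) y w"

definition "P2 x y z w = t x y (plyC m z w) - m z (t x y w) + m w (t x y z)"

definition "P3 x y z w u = t (t x y z) w u - t (t x y w) z u - t x y (plyD m t z w u)
  - t x y (t z w u) + t x y (t w z u) + plyD m t z w (t x y u)"

definition "P4 x y z w u = t z (plyD m t x y w) u + t z (t x y w) u - t z (t y x w) u
  + t z w (plyD m t x y u) + t z w (t x y u) - t z w (t y x u)
  - plyD m t x y (t z w u) + t (plyD m t x y z) w u"

definition "P5 x y z w = m (plyD m t x y z) w + m (t x y z) w - m (t y x z) w
  - plyD m t x y (m z w) + m z (plyD m t x y w)"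

lemmas P_defs = P1_def P2_def P3_def P4_def P5_def

lemma P_vanish:
  "P1 x y z w = 0" "P2 x y z w = 0" "P3 x y z w u = 0" "P4 x y z w u = 0" "P5 x y z w = 0"
  using pre_lie_yamaguti unfolding pre_lie_yamaguti_def P_defs by (simp_all add: algebra_simps)

lemma bilinear_plyC: "bilinear_wrt s (plyC m)"
  unfolding bilinear_wrt_def Vector_Spaces.linear_iff
  by (simp add: vector_space ply_defs additive_simps scale_simps)

lemma trilinear_plyLY: "trilinear_wrt s (plyLY m t)"
  unfolding trilinear_wrt_def Vector_Spaces.linear_iff
  by (simp add: vector_space ply_defs additive_simps scale_simps algebra_simps)

lemma plyC_plyLY_cyclic_sum:
  "plyC m (plyC m x y) z + plyC m (plyC m y z) x + plyC m (plyC m z x) y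
     + plyLY m t x y z + plyLY m t y z x + plyLY m t z x y = 0"
  by (simp add: ply_defs additive_simps algebra_simps)

lemma plyLY_plyC_cyclic_sum:
  "plyLY m t (plyC m x y) z w + plyLY m t (plyC m y z) x w + plyLY m t (plyC m z x) y w = 0"
proof -
  have "plyLY m t (plyC m x y) z w + plyLY m t (plyC m y z) x w + plyLY m t (plyC m z x) y w
      = P1 x z y w - P1 x y z w - P1 y z x w - P1 y z w x + P1 x z w y - P1 x y w z
        + P2 w z x y - P2 w y x z + P2 w x y z + P5 y z x w - P5 x z y w + P5 x y z w"
    by (simp add: P_defs ply_defs additive_simps algebra_simps)
  then show ?thesis by (simp add: P_vanish additive_simps)
qed

lemma plyLY_derivation_plyC:
  "plyLY m t x y (plyC m z w) = plyC m (plyLY m t x y z) w + plyC m z (plyLY m t x y w)"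
proof -
  have "plyLY m t x y (plyC m z w) - (plyC m (plyLY m t x y z) w + plyC m z (plyLY m t x y w))
      = P2 x y z w - P2 y x z w + P5 x y w z - P5 x y z w"
    by (simp add: P_defs ply_defs additive_simps algebra_simps)
  then show ?thesis by (simp add: P_vanish additive_simps)
qed

lemma plyLY_derivation_plyLY:
  "plyLY m t x y (plyLY m t z w u)
     = plyLY m t (plyLY m t x y z) w u + plyLY m t z (plyLY m t x y w) u
       + plyLY m t z w (plyLY m t x y u)"
proof -
  have "plyLY m t x y (plyLY m t z w u)
      - (plyLY m t (plyLY m t x y z) w u + plyLY m t z (plyLY m t x y w) u
         + plyLY m t z w (plyLY m t x y u))
      = m (P2 y x z w) u - m (P2 x y z w) u
        + P3 y x z w u - P3 x y z w u
        + P4 x y w z u - P4 x y z w u + P4 x y u z w - P4 x y u w z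
        - P5 x y z (m w u) - m z (P5 x y w u) - P5 x y (m w z) u - m (P5 x y w z) u
        + P5 x y (m z w) u + m (P5 x y z w) u + P5 x y w (m z u) + m w (P5 x y z u)"
    by (simp add: P_defs ply_defs additive_simps algebra_simps)
  then show ?thesis by (simp add: P_vanish additive_simps)
qed

lemma lie_yamaguti_subadjacent: "lie_yamaguti s (plyC m) (plyLY m t)"
  unfolding lie_yamaguti_def
proof (intro conjI allI)
  fix x y z
  show "plyC m x y = - plyC m y x" "plyLY m t x y z = - plyLY m t y x z"
    by (simp_all add: ply_defs algebra_simps)
qed (fact vector_space bilinear_plyC trilinear_plyLY plyC_plyLY_cyclic_sum plyLY_plyC_cyclic_sum
      plyLY_derivation_plyC plyLY_derivation_plyLY)+

lemma repD_eq_plyD: "repD (plyC m) m (\<lambda>x y z. t z x y) x y = plyD m t x y"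
  by (rule ext) (simp add: repD_def ply_defs additive_simps algebra_simps)

lemma ly_rep_left_right: "ly_rep s (plyC m) (plyLY m t) s m (\<lambda>x y z. t z x y)"
  unfolding ly_rep_def repD_eq_plyD
  using P_vanish multilinear
  by (simp add: vector_space P_defs plyLY_def additive_simps algebra_simps)

lemma relative_rb_id: "relative_rb s (plyC m) (plyLY m t) s m (\<lambda>x y z. t z x y) id"
  unfolding relative_rb_def repD_eq_plyD
  by (simp add: vs.linear_id ply_defs)

end

theorem theorem3p11:
  fixes s :: "'k::field_char_0 \<Rightarrow> 'a::ab_group_add \<Rightarrow> 'a"
    and m :: "'a \<Rightarrow> 'a \<Rightarrow> 'a"
    and t :: "'a \<Rightarrow> 'a \<Rightarrow> 'a \<Rightarrow> 'a"
  assumes "pre_lie_yamaguti s m t"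
  shows "lie_yamaguti s (plyC m) (plyLY m t)
    \<and> ly_rep s (plyC m) (plyLY m t) s (\<lambda>x z. m x z) (\<lambda>x y z. t z x y)
    \<and> relative_rb s (plyC m) (plyLY m t) s (\<lambda>x z. m x z) (\<lambda>x y z. t z x y) id"
proof -
  interpret pre_lie_yamaguti_algebra s m t by unfold_locales (fact assms)
  show ?thesis using lie_yamaguti_subadjacent ly_rep_left_right relative_rb_id by simp
qed

end
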